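(* A point $\mathbf{x}\in\Delta^0$ is a global maximizer of the problem $\max\{f(\mathbf{x}):\mathbf{x}\in\Delta^0\}$ if and only if $\mathbf{x}=\mathbf{x}(C)$ for some maximum clique $C$ of $G$.
   Context: Let $G=(\mathcal{V},\mathcal{E})$ be a simple undirected graph on vertex set $\mathcal{V}=\{1,\dots,n\}$ with adjacency matrix $\mathbf{A}=(a_{ij})$ ($a_{ij}=1$ if $(i,j)\in\mathcal{E}$, else $0$; $a_{ii}=0$). A clique is a subset $C\subseteq\mathcal{V}$ with $(i,j)\in\mathcal{E}$ for all distinct $i,j\in C$; a maximum clique is one of largest cardinality. Let $\Delta=\{\mathbf{x}\in\mathbb{R}^n:\mathbf{0}\le\mathbf{x}\le\mathbf{1},\ \mathbf{1}^{\mathsf T}\mathbf{x}=1\}$, $\mathrm{supp}(\mathbf{x})=\{i:x_i\neq0\}$, and $\Delta^0=\{\mathbf{x}\in\Delta:\mathrm{supp}(\mathbf{x})\text{ is a clique}\}$. For a non-empty clique $C$, $\mathbf{x}(C)\in\Delta$ has $x(C)_i=1/|C|$ for $i\in C$ and $0$ otherwise. For $\mathbf{x}\in\Delta$, $\mathcal{P}(\mathbf{x})$ is the set of vectors in $\Delta$ obtained by permuting the coordinates of $\mathbf{x}$. Let $\Phi:X\to\mathbb{R}$ be twice continuously differentiable on an open set $X\supset\Delta$, satisfying for every $\mathbf{x}\in\Delta$: (C1) $\nabla^2\Phi(\mathbf{x})$ is positive semidefinite; (C2) $\|\nabla^2\Phi(\mathbf{x})\|_2<2$; (C3) $\Phi$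 is constant on $\mathcal{P}(\mathbf{x})$. Define $f(\mathbf{x})=\mathbf{x}^{\mathsf T}\mathbf{A}\mathbf{x}+\Phi(\mathbf{x})$. *)

theory Defs
  imports "HOL-Analysis.Analysis"
begin

text \<open>Vertices are the elements of a finite type 'n (standing for {1..n});
  the graph is given by a symmetric irreflexive edge relation E.\<close>

definition simple_graph :: "('n \<Rightarrow> 'n \<Rightarrow> bool) \<Rightarrow> bool" where
  "simple_graph E \<longleftrightarrow> (\<forall>i j. E i j \<longleftrightarrow> E j i) \<and> (\<forall>i. \<not> E i i)"

definition adj_matrix :: "('n::finite \<Rightarrow> 'n \<Rightarrow> bool) \<Rightarrow> real^'n^'n" where
  "adj_matrix E = (\<chi> i j. if E i j then 1 else 0)"

definition is_clique :: "('n \<Rightarrow> 'n \<Rightarrow> bool) \<Rightarrow> 'n set \<Rightarrow> bool" where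
  "is_clique E C \<longleftrightarrow> (\<forall>i\<in>C. \<forall>j\<in>C. i \<noteq> j \<longrightarrow> E i j)"

definition is_max_clique :: "('n::finite \<Rightarrow> 'n \<Rightarrow> bool) \<Rightarrow> 'n set \<Rightarrow> bool" where
  "is_max_clique E C \<longleftrightarrow> is_clique E C \<and> (\<forall>D. is_clique E D \<longrightarrow> card D \<le> card C)"

definition std_simplex :: "(real^'n::finite) set" where
  "std_simplex = {x. (\<forall>i. 0 \<le> x$i \<and> x$i \<le> 1) \<and> sum (\<lambda>i. x$i) UNIV = 1}"

definition supp :: "real^'n \<Rightarrow> 'n set" where
  "supp x = {i. x$i \<noteq> 0}"

definition std_simplex0 :: "('n::finite \<Rightarrow> 'n \<Rightarrow> bool) \<Rightarrow> (real^'n) set" where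
  "std_simplex0 E = {x \<in> std_simplex. is_clique E (supp x)}"

definition char_vec :: "'n::finite set \<Rightarrow> real^'n" where
  "char_vec C = (\<chi> i. if i \<in> C then 1 / real (card C) else 0)"

definition perms_of :: "real^'n::finite \<Rightarrow> (real^'n) set" where
  "perms_of x = {(\<chi> i. x $ (p i)) | p. p permutes (UNIV :: 'n set)}"

definition obj :: "('n::finite \<Rightarrow> 'n \<Rightarrow> bool) \<Rightarrow> (real^'n \<Rightarrow> real) \<Rightarrow> real^'n \<Rightarrow> real" where
  "obj E \<Phi> x = x \<bullet> (adj_matrix E *v x) + \<Phi> x"

end

theory Submission
  imports Defs "HOL-Combinatorics.Transposition"
begin

text \<open>On \<open>\<Delta>\<^sup>0\<close> the quadratic form contributes \<open>1 - x \<bullet> x\<close>, so one maximises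
  \<open>\<psi> x = \<Phi> x - x \<bullet> x\<close>. The Hessian bound makes \<open>\<psi>\<close> strictly concave on \<open>\<Delta>\<close>, hence on
  each face of \<open>\<Delta>\<close> spanned by a vertex set \<open>D\<close> it has a unique maximiser; by permutation
  invariance of \<open>\<Phi>\<close> this maximiser is symmetric, i.e. equals \<open>x(D)\<close>. The value \<open>\<psi>(x(D))\<close>
  depends only on \<open>|D|\<close> and strictly increases with it, since the faces are nested.
  Only (C2), (C3) and the existence of the first two derivatives are needed.\<close>

subsection \<open>Faces of the standard simplex\<close>

definition simplex_face :: "'n::finite set \<Rightarrow> (real^'n) set" where
  "simplex_face D = {y \<in> std_simplex. supp y \<subseteq> D}"

lemma simplex_face_UNIV [simp]: "simplex_face UNIV = std_simplex"
  by (simp add: simplex_face_def)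

lemma simplex_face_subset: "simplex_face D \<subseteq> std_simplex"
  by (simp add: simplex_face_def)

lemma simplex_face_supp: "y \<in> std_simplex \<Longrightarrow> y \<in> simplex_face (supp y)"
  by (simp add: simplex_face_def)

lemma simplex_face_mono: "D \<subseteq> D' \<Longrightarrow> simplex_face D \<subseteq> simplex_face D'"
  by (auto simp: simplex_face_def)

lemma convex_simplex_face: "convex (simplex_face D)"
  unfolding convex_def
proof (intro ballI allI impI)
  fix y z and u v :: real
  assume y: "y \<in> simplex_face D" and z: "z \<in> simplex_face D" and uv: "0 \<le> u" "0 \<le> v" "u + v = 1"
  have bounds: "0 \<le> (u *\<^sub>R y + v *\<^sub>R z) $ i \<and> (u *\<^sub>R y + v *\<^sub>R z) $ i \<le> 1" for i
  proof -
    have "0 \<le> y$i" "y$i \<le> 1" "0 \<le> z$i" "z$i \<le> 1"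
      using y z unfolding simplex_face_def std_simplex_def by auto
    moreover from this have "u * y$i + v * z$i \<le> u * 1 + v * 1"
      using uv by (intro add_mono mult_left_mono) auto
    ultimately show ?thesis using uv by simp
  qed
  have "(\<Sum>i\<in>UNIV. (u *\<^sub>R y + v *\<^sub>R z) $ i) = u * (\<Sum>i\<in>UNIV. y $ i) + v * (\<Sum>i\<in>UNIV. z $ i)"
    by (simp add: sum.distrib sum_distrib_left)
  also have "\<dots> = 1"
    using y z uv unfolding simplex_face_def std_simplex_def by simp
  moreover have "supp (u *\<^sub>R y + v *\<^sub>R z) \<subseteq> D"
    using y z by (simp add: simplex_face_def supp_def subset_iff) (metis add.right_neutral mult_zero_right)
  ultimately show "u *\<^sub>R y + v *\<^sub>R z \<in> simplex_face D"
    using bounds by (simp add: simplex_face_def std_simplex_def)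
qed

lemma compact_simplex_face: "compact (simplex_face D)"
  unfolding compact_eq_bounded_closed
proof
  have "simplex_face D \<subseteq> cbox 0 (\<chi> i. 1)"
    by (auto simp: simplex_face_def std_simplex_def mem_box_cart)
  then show "bounded (simplex_face D)"
    using bounded_cbox bounded_subset by blast
  have "simplex_face D = (\<Inter>i. {y. 0 \<le> y$i}) \<inter> (\<Inter>i. {y. y$i \<le> 1})
      \<inter> {y. (\<Sum>i\<in>UNIV. y$i) = 1} \<inter> (\<Inter>i\<in>-D. {y. y$i = 0})"
    by (auto simp: simplex_face_def std_simplex_def supp_def)
  moreover have "closed \<dots>"
    by (intro closed_Int closed_INT ballI closed_Collect_le closed_Collect_eq continuous_intros)
  ultimately show "closed (simplex_face D)"
    by simp
qed

lemma supp_nonempty_simplex: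
  assumes "y \<in> std_simplex" shows "supp y \<noteq> {}"
proof
  assume "supp y = {}"
  then have "(\<Sum>i\<in>UNIV. y $ i) = 0"
    by (simp add: supp_def)
  then show False
    using assms by (simp add: std_simplex_def)
qed

lemma sum_indicator_const: "(\<Sum>i\<in>(UNIV::'n::finite set). if i \<in> D then c else 0) = real (card D) * c"
  by (simp add: sum.If_cases)

lemma char_vec_in_simplex_face: "D \<noteq> {} \<Longrightarrow> char_vec D \<in> simplex_face (D :: 'n::finite set)"
  by (auto simp: simplex_face_def std_simplex_def supp_def char_vec_def sum_indicator_const
      Suc_le_eq card_gt_0_iff)

lemma supp_char_vec: "D \<noteq> {} \<Longrightarrow> supp (char_vec (D::'n::finite set)) = D"
  by (auto simp: supp_def char_vec_def card_gt_0_iff)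

lemma char_vec_neq_of_psubset:
  assumes "S \<subset> (D::'n::finite set)"
  shows "char_vec S \<noteq> char_vec D"
proof -
  obtain k where "k \<in> D" "k \<notin> S"
    using assms by blast
  moreover have "card D > 0"
    using \<open>k \<in> D\<close> by (auto simp: card_gt_0_iff)
  ultimately have "char_vec S $ k \<noteq> char_vec D $ k"
    by (auto simp: char_vec_def)
  then show ?thesis
    by force
qed

lemma simplex_face_const_eq_char_vec:
  assumes m: "m \<in> simplex_face D" and D: "D \<noteq> {}"
    and const: "\<And>i j. i \<in> D \<Longrightarrow> j \<in> D \<Longrightarrow> m $ i = m $ j"
  shows "m = char_vec D"
proof -
  obtain d where d: "d \<in> D"
    using D by blast
  have "m $ k = 0" if "k \<notin> D" for k
    using m that by (auto simp: simplex_face_def supp_def)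
  then have mc: "m $ k = (if k \<in> D then m $ d else 0)" for k
    using const[OF _ d] by simp
  have "1 = (\<Sum>k\<in>UNIV. m $ k)"
    using m by (simp add: simplex_face_def std_simplex_def)
  also have "\<dots> = real (card D) * m $ d"
    by (subst mc) (rule sum_indicator_const)
  moreover have "card D > 0"
    using d by (auto simp: card_gt_0_iff)
  ultimately have "m $ d = 1 / real (card D)"
    by (auto simp: eq_divide_eq mult.commute)
  then show ?thesis
    using mc by (simp add: char_vec_def vec_eq_iff)
qed

lemma permutes_UNIV_between:
  fixes D C :: "'n::finite set"
  assumes "card D = card C"
  obtains p where "p permutes UNIV" "\<And>i. p i \<in> C \<longleftrightarrow> i \<in> D"
proof -
  obtain f where f: "bij_betw f D C"
    using finite_same_card_bij[OF finite finite assms] by blast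
  have "card (UNIV - D) = card (UNIV - C)"
    using assms by (simp add: card_Diff_subset)
  then obtain h where h: "bij_betw h (UNIV - D) (UNIV - C)"
    using finite_same_card_bij[OF finite finite] by blast
  define p where "p i = (if i \<in> D then f i else h i)" for i
  have pD: "bij_betw p D C"
    using f by (rule bij_betw_cong[THEN iffD1, rotated]) (simp add: p_def)
  have pD': "bij_betw p (UNIV - D) (UNIV - C)"
    using h by (rule bij_betw_cong[THEN iffD1, rotated]) (simp add: p_def)
  have "bij_betw p UNIV UNIV"
    using bij_betw_combine[OF pD pD'] by simp
  then have "p permutes UNIV"
    by (rule bij_imp_permutes) simp
  moreover have "p i \<in> C \<longleftrightarrow> i \<in> D" for i
    using bij_betwE[OF pD] bij_betwE[OF pD'] by blast
  ultimately show ?thesis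
    using that by blast
qed

lemma
  fixes y :: "real^'n::finite"
  assumes "p permutes UNIV"
  shows inner_permute_vec: "(\<chi> i. y $ p i) \<bullet> (\<chi> i. y $ p i) = y \<bullet> y"
    and sum_permute_vec: "(\<Sum>i\<in>UNIV. (\<chi> i. y $ p i) $ i) = (\<Sum>i\<in>UNIV. y $ i)"
  using sum.permute[OF assms, of "\<lambda>i. y$i \<bullet> y$i"] sum.permute[OF assms, of "\<lambda>i. y$i"]
  by (simp_all add: inner_vec_def o_def)

subsection \<open>Strict concavity from a Hessian bound\<close>

lemma second_order_mean_value:
  fixes \<Phi> :: "real^'n::finite \<Rightarrow> real"
  assumes seg: "closed_segment y z \<subseteq> X"
    and grad: "\<And>w. w \<in> X \<Longrightarrow> (\<Phi> has_derivative (\<lambda>h. g w \<bullet> h)) (at w)"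
    and hess: "\<And>w. w \<in> X \<Longrightarrow> (g has_derivative (\<lambda>h. H w *v h)) (at w)"
  obtains t where "0 < t" "t < 1"
    "\<Phi> z = \<Phi> y + g y \<bullet> (z - y) + (H (y + t *\<^sub>R (z - y)) *v (z - y)) \<bullet> (z - y) / 2"
proof -
  define d where "d = z - y"
  define p where "p t = y + t *\<^sub>R d" for t :: real
  define diff where "diff m = (if m = 0 then (\<lambda>t. \<Phi> (p t)) else if m = 1 then (\<lambda>t. g (p t) \<bullet> d)
      else (\<lambda>t. (H (p t) *v d) \<bullet> d))" for m :: nat
  have pX: "p t \<in> X" if "0 \<le> t" "t \<le> 1" for t
  proof -
    have "p t = (1 - t) *\<^sub>R y + t *\<^sub>R z"
      by (simp add: p_def d_def algebra_simps)
    moreover have "(1 - t) *\<^sub>R y + t *\<^sub>R z \<in> closed_segment y z"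
      using that by (auto simp: in_segment intro!: exI[of _ t])
    ultimately show ?thesis
      using seg by auto
  qed
  have dp: "(p has_derivative (\<lambda>s. s *\<^sub>R d)) (at t)" for t
    unfolding p_def by (auto intro!: derivative_eq_intros)
  have "DERIV (diff m) t :> diff (Suc m) t" if "m < 2" "0 \<le> t" "t \<le> 1" for m t
  proof -
    have "((\<lambda>t. \<Phi> (p t)) has_derivative (\<lambda>s. g (p t) \<bullet> (s *\<^sub>R d))) (at t)"
      using has_derivative_compose[OF dp grad[OF pX[OF that(2,3)]]] by (simp add: o_def)
    moreover have "(\<lambda>s. g (p t) \<bullet> (s *\<^sub>R d)) = (*) (g (p t) \<bullet> d)"
      by (auto simp: fun_eq_iff inner_scaleR_right)
    ultimately have D0: "DERIV (diff 0) t :> diff 1 t"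
      by (simp add: diff_def has_field_derivative_def)
    have "(g \<circ> p has_derivative (\<lambda>s. H (p t) *v (s *\<^sub>R d))) (at t)"
      using has_derivative_compose[OF dp hess[OF pX[OF that(2,3)]]] by (simp add: o_def)
    then have "((\<lambda>t. g (p t) \<bullet> d) has_derivative (\<lambda>s. (H (p t) *v (s *\<^sub>R d)) \<bullet> d)) (at t)"
      using has_derivative_inner_left by (fastforce simp: o_def)
    moreover have "(\<lambda>s. (H (p t) *v (s *\<^sub>R d)) \<bullet> d) = (*) ((H (p t) *v d) \<bullet> d)"
      by (auto simp: fun_eq_iff matrix_vector_mult_scaleR inner_scaleR_left)
    ultimately have D1: "DERIV (diff 1) t :> diff 2 t"
      by (simp add: diff_def has_field_derivative_def)
    have "m = 0 \<or> m = 1"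
      using that(1) by auto
    then show ?thesis
      using D0 D1 by (auto simp: numeral_2_eq_2)
  qed
  then obtain t where "0 < t" "t < 1"
    "diff 0 1 = (\<Sum>m<2. diff m 0 / fact m * 1 ^ m) + diff 2 t / fact 2 * 1 ^ 2"
    using Maclaurin[of 1 2 diff "diff 0"] by auto
  then show ?thesis
    using that by (simp add: diff_def p_def d_def numeral_2_eq_2)
qed

lemma second_order_remainder_less:
  fixes \<Phi> :: "real^'n::finite \<Rightarrow> real"
  assumes S: "convex S" "S \<subseteq> X" and yz: "y \<in> S" "z \<in> S" "y \<noteq> z"
    and grad: "\<And>w. w \<in> X \<Longrightarrow> (\<Phi> has_derivative (\<lambda>h. g w \<bullet> h)) (at w)"
    and hess: "\<And>w. w \<in> X \<Longrightarrow> (g has_derivative (\<lambda>h. H w *v h)) (at w)"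
    and hess_bound: "\<And>w. w \<in> S \<Longrightarrow> onorm (\<lambda>v. H w *v v) < M"
  shows "\<Phi> z - \<Phi> y - g y \<bullet> (z - y) < M / 2 * ((z - y) \<bullet> (z - y))"
proof -
  define d where "d = z - y"
  have seg: "closed_segment y z \<subseteq> S"
    using S(1) yz convex_contains_segment by blast
  obtain t where t: "0 < t" "t < 1"
    and taylor: "\<Phi> z = \<Phi> y + g y \<bullet> d + (H (y + t *\<^sub>R d) *v d) \<bullet> d / 2"
    using second_order_mean_value[OF order_trans[OF seg S(2)] grad hess] unfolding d_def by blast
  have "y + t *\<^sub>R d = (1 - t) *\<^sub>R y + t *\<^sub>R z"
    by (simp add: d_def algebra_simps)
  moreover have "(1 - t) *\<^sub>R y + t *\<^sub>R z \<in> closed_segment y z"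
    using t by (auto simp: in_segment intro!: exI[of _ t])
  ultimately have "y + t *\<^sub>R d \<in> S"
    using seg by auto
  then have bound: "onorm (\<lambda>v. H (y + t *\<^sub>R d) *v v) < M"
    by (rule hess_bound)
  have "(H (y + t *\<^sub>R d) *v d) \<bullet> d \<le> norm (H (y + t *\<^sub>R d) *v d) * norm d"
    by (rule norm_cauchy_schwarz)
  also have "\<dots> \<le> onorm (\<lambda>v. H (y + t *\<^sub>R d) *v v) * norm d * norm d"
    by (intro mult_right_mono onorm) auto
  also have "\<dots> < M * norm d * norm d"
    using bound yz by (simp add: d_def)
  finally have "(H (y + t *\<^sub>R d) *v d) \<bullet> d < M * (d \<bullet> d)"
    by (simp add: power2_norm_eq_inner[symmetric] power2_eq_square)
  then show ?thesis
    using taylor unfolding d_def by simp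
qed

text \<open>Subtracting \<open>w \<bullet> w\<close>, whose Hessian is \<open>2 I\<close>, turns the bound \<open>\<parallel>\<nabla>\<^sup>2\<Phi>\<parallel> < 2\<close> into
  strict concavity.\<close>

lemma midpoint_strict_concave_minus_norm:
  fixes \<Phi> :: "real^'n::finite \<Rightarrow> real"
  assumes S: "convex S" "S \<subseteq> X" and yz: "y \<in> S" "z \<in> S" "y \<noteq> z"
    and grad: "\<And>w. w \<in> X \<Longrightarrow> (\<Phi> has_derivative (\<lambda>h. g w \<bullet> h)) (at w)"
    and hess: "\<And>w. w \<in> X \<Longrightarrow> (g has_derivative (\<lambda>h. H w *v h)) (at w)"
    and hess_bound: "\<And>w. w \<in> S \<Longrightarrow> onorm (\<lambda>v. H w *v v) < 2"
  shows "(\<Phi> y - y \<bullet> y) + (\<Phi> z - z \<bullet> z) < 2 * (\<Phi> (midpoint y z) - midpoint y z \<bullet> midpoint y z)"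
proof -
  define m where "m = midpoint y z"
  have m: "m \<in> S"
    using S(1) yz midpoint_in_closed_segment convex_contains_segment unfolding m_def by blast
  have tangent: "\<Phi> w - w \<bullet> w < \<Phi> m - m \<bullet> m + (g m - 2 *\<^sub>R m) \<bullet> (w - m)" if "w \<in> S" "w \<noteq> m" for w
  proof -
    have "w \<bullet> w - m \<bullet> m - (2 *\<^sub>R m) \<bullet> (w - m) = (w - m) \<bullet> (w - m)"
      by (simp add: inner_diff_left inner_diff_right inner_commute)
    then show ?thesis
      using second_order_remainder_less[OF S m that(1) that(2)[symmetric] grad hess hess_bound]
      by (simp add: inner_diff_left)
  qed
  have "y \<noteq> m" "z \<noteq> m"
    using yz(3) midpoint_eq_endpoint[of y z] unfolding m_def by metis+
  then have "\<Phi> y - y \<bullet> y + (\<Phi> z - z \<bullet> z)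
      < (\<Phi> m - m \<bullet> m + (g m - 2 *\<^sub>R m) \<bullet> (y - m)) + (\<Phi> m - m \<bullet> m + (g m - 2 *\<^sub>R m) \<bullet> (z - m))"
    by (intro add_strict_mono tangent yz)
  also have "\<dots> = 2 * (\<Phi> m - m \<bullet> m) + (g m - 2 *\<^sub>R m) \<bullet> ((y - m) + (z - m))"
    by (subst inner_add_right) (simp add: algebra_simps)
  also have "(y - m) + (z - m) = (y + z) - (m + m)"
    by (rule add_diff_add[symmetric])
  also have "\<dots> = 0"
    unfolding m_def by simp
  finally show ?thesis
    unfolding m_def by simp
qed

lemma unique_maximizer_midpoint_strict:
  fixes \<psi> :: "'a::real_normed_vector \<Rightarrow> real"
  assumes K: "compact K" "convex K" "K \<noteq> {}" and cont: "continuous_on K \<psi>"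
    and strict: "\<And>y z. y \<in> K \<Longrightarrow> z \<in> K \<Longrightarrow> y \<noteq> z \<Longrightarrow> \<psi> y + \<psi> z < 2 * \<psi> (midpoint y z)"
  obtains m where "m \<in> K" "\<And>y. y \<in> K \<Longrightarrow> \<psi> y \<le> \<psi> m"
    "\<And>y. y \<in> K \<Longrightarrow> \<psi> y = \<psi> m \<Longrightarrow> y = m"
proof -
  obtain m where m: "m \<in> K" and max: "\<And>y. y \<in> K \<Longrightarrow> \<psi> y \<le> \<psi> m"
    using continuous_attains_sup[OF K(1,3) cont] by blast
  have "y = m" if y: "y \<in> K" "\<psi> y = \<psi> m" for y
  proof (rule ccontr)
    assume "y \<noteq> m"
    then have "\<psi> y + \<psi> m < 2 * \<psi> (midpoint y m)"
      by (rule strict[OF y(1) m])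
    moreover have "midpoint y m \<in> K"
      using K(2) y(1) m by (meson convex_contains_segment midpoint_in_closed_segment subsetD)
    ultimately show False
      using max[of "midpoint y m"] y(2) by linarith
  qed
  with m max show ?thesis
    by (rule that)
qed

subsection \<open>Maximising \<open>\<Phi> x - x \<bullet> x\<close> over faces of the simplex\<close>

locale symmetric_potential =
  fixes \<Phi> :: "real^'n::finite \<Rightarrow> real"
    and g :: "real^'n \<Rightarrow> real^'n"
    and H :: "real^'n \<Rightarrow> real^'n^'n"
    and X :: "(real^'n) set"
  assumes simplex_subset: "std_simplex \<subseteq> X"
    and grad: "\<And>y. y \<in> X \<Longrightarrow> (\<Phi> has_derivative (\<lambda>h. g y \<bullet> h)) (at y)"
    and hess: "\<And>y. y \<in> X \<Longrightarrow> (g has_derivative (\<lambda>h. H y *v h)) (at y)"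
    and hess_bound: "\<And>y. y \<in> std_simplex \<Longrightarrow> onorm (\<lambda>v. H y *v v) < 2"
    and perm_invariant: "\<And>y z. y \<in> std_simplex \<Longrightarrow> z \<in> perms_of y \<Longrightarrow> \<Phi> z = \<Phi> y"
begin

definition \<psi> :: "real^'n \<Rightarrow> real" where
  "\<psi> y = \<Phi> y - y \<bullet> y"

lemma continuous_on_\<psi>: "continuous_on std_simplex \<psi>"
proof -
  have "continuous_on X \<Phi>"
    using grad has_derivative_continuous continuous_at_imp_continuous_on by blast
  then have "continuous_on std_simplex \<Phi>"
    using continuous_on_subset simplex_subset by blast
  then show ?thesis
    unfolding \<psi>_def by (intro continuous_intros)
qed

lemma \<psi>_midpoint_strict:
  "y \<in> std_simplex \<Longrightarrow> z \<in> std_simplex \<Longrightarrow> y \<noteq> z \<Longrightarrow> \<psi> y + \<psi> z < 2 * \<psi> (midpoint y z)"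
  unfolding \<psi>_def
  by (rule midpoint_strict_concave_minus_norm[where S = std_simplex, OF _ simplex_subset _ _ _ grad hess
        hess_bound]) (use convex_simplex_face[of UNIV] in simp_all)

lemma \<psi>_permute:
  assumes "y \<in> std_simplex" "p permutes UNIV"
  shows "\<psi> (\<chi> i. y $ p i) = \<psi> y"
proof -
  have "(\<chi> i. y $ p i) \<in> perms_of y"
    using assms(2) unfolding perms_of_def by blast
  then show ?thesis
    using perm_invariant[OF assms(1)] inner_permute_vec[OF assms(2)] by (simp add: \<psi>_def)
qed

lemma \<psi>_le_char_vec:
  assumes D: "D \<noteq> {}" and y: "y \<in> simplex_face D"
  shows "\<psi> y \<le> \<psi> (char_vec D)"
    and "\<psi> y = \<psi> (char_vec D) \<Longrightarrow> y = char_vec D"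
proof -
  note face = simplex_face_subset[of D]
  obtain m where m: "m \<in> simplex_face D" and max: "\<And>y. y \<in> simplex_face D \<Longrightarrow> \<psi> y \<le> \<psi> m"
    and uniq: "\<And>y. y \<in> simplex_face D \<Longrightarrow> \<psi> y = \<psi> m \<Longrightarrow> y = m"
    using unique_maximizer_midpoint_strict[OF compact_simplex_face convex_simplex_face
        _ continuous_on_subset[OF continuous_on_\<psi> face]] \<psi>_midpoint_strict face
      char_vec_in_simplex_face[OF D] by blast
  text \<open>The maximiser is unique, so it is fixed by every transposition of coordinates in \<open>D\<close>.\<close>
  have "m $ i = m $ j" if "i \<in> D" "j \<in> D" for i j
  proof -
    define m' where "m' = (\<chi> k. m $ Transposition.transpose i j k)"
    have p: "Transposition.transpose i j permutes UNIV"
      by (rule permutes_swap_id) auto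
    have "(\<Sum>k\<in>UNIV. m' $ k) = 1"
      using sum_permute_vec[OF p, of m] m unfolding m'_def simplex_face_def std_simplex_def by simp
    then have "m' \<in> simplex_face D"
      using m that unfolding simplex_face_def std_simplex_def supp_def m'_def
      by (auto simp: Transposition.transpose_def)
    moreover have "\<psi> m' = \<psi> m"
      unfolding m'_def using \<psi>_permute[OF _ p] m face by blast
    ultimately have "m' = m"
      by (rule uniq)
    then show ?thesis
      unfolding m'_def by (metis transpose_eq_iff vec_lambda_beta)
  qed
  then have "m = char_vec D"
    by (rule simplex_face_const_eq_char_vec[OF m D])
  then show "\<psi> y \<le> \<psi> (char_vec D)" "\<psi> y = \<psi> (char_vec D) \<Longrightarrow> y = char_vec D"
    using max[OF y] uniq[OF y] by auto
qed

lemma \<psi>_char_vec_card_eq: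
  assumes D: "D \<noteq> {}" and card: "card D = card C"
  shows "\<psi> (char_vec D) = \<psi> (char_vec C)"
proof -
  obtain p where p: "p permutes UNIV" and pC: "\<And>i. p i \<in> C \<longleftrightarrow> i \<in> D"
    using permutes_UNIV_between[OF card] by blast
  have "C \<noteq> {}"
    using D card by auto
  then have "char_vec C \<in> std_simplex"
    using char_vec_in_simplex_face simplex_face_subset by auto
  moreover have "char_vec D = (\<chi> i. char_vec C $ p i)"
    using pC card by (simp add: char_vec_def vec_eq_iff)
  ultimately show ?thesis
    using \<psi>_permute[OF _ p] by simp
qed

lemma \<psi>_char_vec_less_of_psubset:
  assumes S: "S \<noteq> {}" and SD: "S \<subset> D"
  shows "\<psi> (char_vec S) < \<psi> (char_vec D)"
proof -
  have "char_vec S \<in> simplex_face D"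
    using char_vec_in_simplex_face[OF S] simplex_face_mono SD by blast
  moreover have "D \<noteq> {}"
    using S SD by blast
  ultimately have "\<psi> (char_vec S) \<le> \<psi> (char_vec D)" "\<psi> (char_vec S) \<noteq> \<psi> (char_vec D)"
    using \<psi>_le_char_vec char_vec_neq_of_psubset[OF SD] by blast+
  then show ?thesis
    by (simp add: order_less_le)
qed

lemma \<psi>_char_vec_card_less:
  assumes S: "S \<noteq> {}" and card: "card S < card C"
  shows "\<psi> (char_vec S) < \<psi> (char_vec C)"
proof -
  have "card C - card S \<le> card (UNIV - S)"
    using card_mono[of UNIV C] by (simp add: card_Diff_subset)
  then obtain T where T: "T \<subseteq> UNIV - S" "card T = card C - card S"
    by (meson obtain_subset_with_card_n)
  then have "T \<noteq> {}"
    using card by auto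
  then have "S \<subset> S \<union> T"
    using T(1) by blast
  then have "\<psi> (char_vec S) < \<psi> (char_vec (S \<union> T))"
    by (rule \<psi>_char_vec_less_of_psubset[OF S])
  also have "\<dots> = \<psi> (char_vec C)"
  proof (rule \<psi>_char_vec_card_eq)
    show "S \<union> T \<noteq> {}"
      using S by blast
    show "card (S \<union> T) = card C"
      using T card by (subst card_Un_disjoint) auto
  qed
  finally show ?thesis .
qed

lemma \<psi>_le_char_vec_of_card_le:
  assumes y: "y \<in> std_simplex" and card: "card (supp y) \<le> card C"
  shows "\<psi> y \<le> \<psi> (char_vec C)"
    and "\<psi> y = \<psi> (char_vec C) \<Longrightarrow> card (supp y) = card C \<and> y = char_vec (supp y)"
proof -
  have S: "supp y \<noteq> {}"
    using supp_nonempty_simplex[OF y] .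
  have face: "\<psi> y \<le> \<psi> (char_vec (supp y))"
    by (rule \<psi>_le_char_vec(1)[OF S simplex_face_supp[OF y]])
  have mono: "\<psi> (char_vec (supp y)) \<le> \<psi> (char_vec C)"
    and strict: "card (supp y) < card C \<Longrightarrow> \<psi> (char_vec (supp y)) < \<psi> (char_vec C)"
    using card \<psi>_char_vec_card_less[OF S] \<psi>_char_vec_card_eq[OF S, of C]
    by (fastforce simp: order_le_less)+
  show "\<psi> y \<le> \<psi> (char_vec C)"
    using face mono by (rule order_trans)
  assume eq: "\<psi> y = \<psi> (char_vec C)"
  have "card (supp y) = card C"
    using card strict face eq by fastforce
  moreover have "\<psi> y = \<psi> (char_vec (supp y))"
    using face mono eq by linarith
  then have "y = char_vec (supp y)"
    by (rule \<psi>_le_char_vec(2)[OF S simplex_face_supp[OF y]])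
  ultimately show "card (supp y) = card C \<and> y = char_vec (supp y)" ..
qed

end

subsection \<open>Cliques\<close>

lemma obj_eq_on_simplex0:
  assumes graph: "simple_graph E" and y: "y \<in> std_simplex0 E"
  shows "obj E \<Phi> y = 1 - y \<bullet> y + \<Phi> y"
proof -
  have ys: "y \<in> std_simplex" and cl: "is_clique E (supp y)"
    using y unfolding std_simplex0_def by auto
  have edge: "y$i * ((if E i j then 1 else 0) * y$j) = (if i = j then 0 else y$i * y$j)" for i j
    using graph cl unfolding simple_graph_def is_clique_def supp_def by auto
  have "y \<bullet> (adj_matrix E *v y) = (\<Sum>i\<in>UNIV. \<Sum>j\<in>UNIV. y$i * ((if E i j then 1 else 0) * y$j))"
    unfolding inner_vec_def matrix_vector_mult_def adj_matrix_def by (simp add: sum_distrib_left)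
  also have "\<dots> = (\<Sum>i\<in>UNIV. \<Sum>j\<in>UNIV. y$i * y$j - (if i = j then y$i * y$j else 0))"
    unfolding edge by (intro sum.cong) auto
  also have "\<dots> = (\<Sum>i\<in>UNIV. y$i) * (\<Sum>j\<in>UNIV. y$j) - (\<Sum>i\<in>UNIV. y$i * y$i)"
    by (simp add: sum_subtractf sum_product)
  also have "\<dots> = 1 - y \<bullet> y"
    using ys unfolding std_simplex_def inner_vec_def by simp
  finally show ?thesis
    unfolding obj_def by simp
qed

lemma max_clique_exists:
  fixes E :: "'n::finite \<Rightarrow> 'n \<Rightarrow> bool"
  obtains C where "is_max_clique E C"
proof -
  define K where "K = {D :: 'n set. is_clique E D}"
  have "{} \<in> K"
    by (simp add: K_def is_clique_def)
  then obtain C where "C \<in> K" "card C = Max (card ` K)"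
    using Max_in[of "card ` K"] by fastforce
  then have "is_max_clique E C"
    using Max_ge[of "card ` K"] by (auto simp: K_def is_max_clique_def)
  then show ?thesis
    by (rule that)
qed

lemma max_clique_nonempty:
  fixes C :: "'n::finite set"
  assumes "is_max_clique E C"
  shows "C \<noteq> {}"
proof -
  obtain i :: 'n where "i \<in> UNIV"
    by blast
  have "is_clique E {i}"
    by (simp add: is_clique_def)
  then have "1 \<le> card C"
    using assms by (fastforce simp: is_max_clique_def)
  then show ?thesis
    by auto
qed

lemma char_vec_in_simplex0:
  assumes C: "C \<noteq> {}" "is_clique E C"
  shows "char_vec C \<in> std_simplex0 E"
proof -
  have "char_vec C \<in> std_simplex"
    using char_vec_in_simplex_face[OF C(1)] simplex_face_subset by auto
  then show ?thesis
    using supp_char_vec[OF C(1)] C(2) by (simp add: std_simplex0_def)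
qed

theorem corollary1:
  fixes E :: "'n::finite \<Rightarrow> 'n \<Rightarrow> bool"
    and \<Phi> :: "real^'n \<Rightarrow> real"
    and g :: "real^'n \<Rightarrow> real^'n"
    and H :: "real^'n \<Rightarrow> real^'n^'n"
    and X :: "(real^'n) set"
    and x :: "real^'n"
  assumes graph: "simple_graph E"
    and X_open: "open X" and X_sup: "std_simplex \<subseteq> X"
    and grad: "\<And>y. y \<in> X \<Longrightarrow> (\<Phi> has_derivative (\<lambda>h. g y \<bullet> h)) (at y)"
    and hess: "\<And>y. y \<in> X \<Longrightarrow> (g has_derivative (\<lambda>h. H y *v h)) (at y)"
    and hess_cont: "continuous_on X H"
    and C1: "\<And>y v. y \<in> std_simplex \<Longrightarrow> 0 \<le> v \<bullet> (H y *v v)"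
    and C2: "\<And>y. y \<in> std_simplex \<Longrightarrow> onorm (\<lambda>v. H y *v v) < 2"
    and C3: "\<And>y z. y \<in> std_simplex \<Longrightarrow> z \<in> perms_of y \<Longrightarrow> \<Phi> z = \<Phi> y"
    and x_in: "x \<in> std_simplex0 E"
  shows "(\<forall>y \<in> std_simplex0 E. obj E \<Phi> y \<le> obj E \<Phi> x) \<longleftrightarrow>
         (\<exists>C. is_max_clique E C \<and> x = char_vec C)"
proof -
  interpret symmetric_potential \<Phi> g H X
    using X_sup grad hess C2 C3 by unfold_locales
  have obj_\<psi>: "obj E \<Phi> y = 1 + \<psi> y" if "y \<in> std_simplex0 E" for y
    using obj_eq_on_simplex0[OF graph that] by (simp add: \<psi>_def)
  have card_supp: "card (supp y) \<le> card C" if "y \<in> std_simplex0 E" "is_max_clique E C" for y C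
    using that by (simp add: std_simplex0_def is_max_clique_def)
  have xs: "x \<in> std_simplex" and x_clique: "is_clique E (supp x)"
    using x_in by (auto simp: std_simplex0_def)
  show ?thesis
  proof
    assume max: "\<forall>y \<in> std_simplex0 E. obj E \<Phi> y \<le> obj E \<Phi> x"
    obtain C where C: "is_max_clique E C"
      by (rule max_clique_exists)
    have "char_vec C \<in> std_simplex0 E"
      using C by (intro char_vec_in_simplex0 max_clique_nonempty) (simp_all add: is_max_clique_def)
    then have "\<psi> (char_vec C) \<le> \<psi> x"
      using max obj_\<psi> x_in by fastforce
    then have "\<psi> x = \<psi> (char_vec C)"
      using \<psi>_le_char_vec_of_card_le(1)[OF xs card_supp[OF x_in C]] by linarith
    then have "card (supp x) = card C" "x = char_vec (supp x)"
      using \<psi>_le_char_vec_of_card_le(2)[OF xs card_supp[OF x_in C]] by blast+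
    moreover have "is_max_clique E (supp x)"
      using C x_clique \<open>card (supp x) = card C\<close> by (simp add: is_max_clique_def)
    ultimately show "\<exists>C. is_max_clique E C \<and> x = char_vec C"
      by blast
  next
    assume "\<exists>C. is_max_clique E C \<and> x = char_vec C"
    then obtain C where C: "is_max_clique E C" and xC: "x = char_vec C"
      by blast
    show "\<forall>y \<in> std_simplex0 E. obj E \<Phi> y \<le> obj E \<Phi> x"
    proof
      fix y
      assume y: "y \<in> std_simplex0 E"
      then have "\<psi> y \<le> \<psi> x"
        unfolding xC by (intro \<psi>_le_char_vec_of_card_le(1) card_supp[OF y C]) (simp add: std_simplex0_def)
      then show "obj E \<Phi> y \<le> obj E \<Phi> x"
        using obj_\<psi>[OF y] obj_\<psi>[OF x_in] by simp
    qed
  qed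
qed

end
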